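(* Let $(\phi_t)_{t\ge0}$ be a semigroup of holomorphic self-maps of $\mathbb D$ such that each $\phi_t$, $t>0$, is parabolic. If there exists $t_0>0$ such that $\phi_{t_0}$ is of zero hyperbolic step, then $\phi_t$ is of zero hyperbolic step for all $t>0$.
   Context: $\mathbb D$ is the open unit disk and $\rho_{\mathbb D}$ its hyperbolic distance. A semigroup of holomorphic functions is a family $(\phi_t)_{t\ge0}$ of holomorphic self-maps of $\mathbb D$ with $\phi_0=\mathrm{id}_{\mathbb D}$, $\phi_{t+s}=\phi_t\circ\phi_s$ for all $t,s\ge0$, and $\phi_t(z)\to z$ as $t\to0$ uniformly on compact subsets of $\mathbb D$. A holomorphic self-map $\phi$ of $\mathbb D$ is parabolic if it has no fixed point in $\mathbb D$ and its Denjoy–Wolff point $\tau\in\partial\mathbb D$ (the boundary point to which the iterates converge locally uniformly) satisfies $\phi'(\tau)=1$ (angular derivative). $\phi$ is of zero hyperbolic step if for some (equivalently every) $z_0\in\mathbb D$ the orbit $z_n=\phi^{\circ n}(z_0)$ satisfies $\lim_{n\to\infty}\rho_{\mathbb D}(z_n,z_{n+1})=0$. *)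

theory Defs
  imports "HOL-Complex_Analysis.Complex_Analysis"
begin

definition unit_disc :: "complex set" where
  "unit_disc = ball 0 1"

definition hyp_dist :: "complex \<Rightarrow> complex \<Rightarrow> real" where
  "hyp_dist z w = artanh (cmod (z - w) / cmod (1 - cnj w * z))"

definition holo_self_map :: "(complex \<Rightarrow> complex) \<Rightarrow> bool" where
  "holo_self_map f \<longleftrightarrow> f holomorphic_on unit_disc \<and> f ` unit_disc \<subseteq> unit_disc"

definition holo_semigroup :: "(real \<Rightarrow> complex \<Rightarrow> complex) \<Rightarrow> bool" where
  "holo_semigroup phi \<longleftrightarrow>
     (\<forall>t\<ge>0. holo_self_map (phi t)) \<and>
     (\<forall>z\<in>unit_disc. phi 0 z = z) \<and>
     (\<forall>t\<ge>0. \<forall>s\<ge>0. \<forall>z\<in>unit_disc. phi (t + s) z = phi t (phi s z)) \<and>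
     (\<forall>K. compact K \<and> K \<subseteq> unit_disc \<longrightarrow>
        uniform_limit K phi (\<lambda>z. z) (at_right 0))"

definition stolz_angle :: "complex \<Rightarrow> real \<Rightarrow> complex set" where
  "stolz_angle tau M = {z \<in> unit_disc. cmod (tau - z) < M * (1 - cmod z)}"

definition angular_limit :: "(complex \<Rightarrow> complex) \<Rightarrow> complex \<Rightarrow> complex \<Rightarrow> bool" where
  "angular_limit f tau L \<longleftrightarrow>
     (\<forall>M>1. (f \<longlongrightarrow> L) (at tau within stolz_angle tau M))"

definition boundary_DW_point :: "(complex \<Rightarrow> complex) \<Rightarrow> complex \<Rightarrow> bool" where
  "boundary_DW_point f tau \<longleftrightarrow> cmod tau = 1 \<and>
     (\<forall>K. compact K \<and> K \<subseteq> unit_disc \<longrightarrow>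
        uniform_limit K (\<lambda>n. (f ^^ n)) (\<lambda>_. tau) sequentially)"

definition angular_derivative :: "(complex \<Rightarrow> complex) \<Rightarrow> complex \<Rightarrow> complex \<Rightarrow> bool" where
  "angular_derivative f tau c \<longleftrightarrow>
     angular_limit f tau tau \<and> angular_limit (\<lambda>z. (f z - tau) / (z - tau)) tau c"

definition parabolic :: "(complex \<Rightarrow> complex) \<Rightarrow> bool" where
  "parabolic f \<longleftrightarrow> holo_self_map f \<and> (\<forall>z\<in>unit_disc. f z \<noteq> z) \<and>
     (\<exists>tau. boundary_DW_point f tau \<and> angular_derivative f tau 1)"

definition zero_hyp_step :: "(complex \<Rightarrow> complex) \<Rightarrow> bool" where
  "zero_hyp_step f \<longleftrightarrow> (\<exists>z0\<in>unit_disc.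
     (\<lambda>n. hyp_dist ((f ^^ n) z0) ((f ^^ Suc n) z0)) \<longlonglongrightarrow> 0)"

end

theory Submission
  imports Defs
begin

text \<open>Map the disc to the upper half-plane by the Cayley transform C sending the common
  Denjoy-Wolff point \<tau> to infinity (common, because orbits staying at bounded hyperbolic distance
  from each other converge to the same boundary point). By Julia's lemma every phi_v raises the
  height Im C, so the displacement D_v(x) = C(phi_v x) - C(x) is holomorphic with values in the
  closed upper half-plane, and the hyperbolic steps of phi_v tend to 0 exactly when
  |D_v| = o(Im C). Harnack's inequality for D_a between x and phi_b x makes v \<mapsto> D_v(x) additive
  up to an error O(|D_t0(x)|) for v \<le> t0. Splitting [0, t0] into short pieces, on which D is small
  by continuity of the semigroup, gives |D_v| = o(Im C) along the orbit of phi_t0 for all v \<le> t0;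
  Schwarz-Pick passes from that discrete orbit to the whole trajectory, and the relative
  displacement is subadditive in v, which reaches all v > 0.\<close>

definition pseudo_hyp_dist :: "complex \<Rightarrow> complex \<Rightarrow> real" where
  "pseudo_hyp_dist a b = cmod (a - b) / cmod (1 - cnj b * a)"

lemma hyp_dist_eq_artanh: "hyp_dist a b = artanh (pseudo_hyp_dist a b)"
  by (simp add: hyp_dist_def pseudo_hyp_dist_def)

lemma one_minus_cnj_mult_nonzero:
  assumes "cmod a < 1" "cmod b < 1"
  shows "1 - cnj b * a \<noteq> 0"
proof
  assume "1 - cnj b * a = 0"
  then have "cmod b * cmod a = 1" by (metis complex_mod_cnj norm_mult norm_one eq_iff_diff_eq_0)
  moreover have "cmod b * cmod a < 1" using assms
    by (metis mult_strict_mono' norm_ge_zero mult_1_right)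
  ultimately show False by simp
qed

lemma one_minus_pseudo_hyp_dist_power2:
  assumes "cmod a < 1" "cmod b < 1"
  shows "1 - (pseudo_hyp_dist a b)^2
    = (1 - (cmod a)^2) * (1 - (cmod b)^2) / (cmod (1 - cnj b * a))^2"
proof -
  have "(cmod (1 - cnj b * a))^2 - (cmod (a - b))^2 = (1 - (cmod a)^2) * (1 - (cmod b)^2)"
    unfolding cmod_power2 by (simp add: power2_eq_square algebra_simps)
  then show ?thesis using one_minus_cnj_mult_nonzero[OF assms]
    by (simp add: pseudo_hyp_dist_def power_divide field_simps)
qed

lemma pseudo_hyp_dist_nonneg: "pseudo_hyp_dist a b \<ge> 0"
  by (simp add: pseudo_hyp_dist_def)

lemma pseudo_hyp_dist_self [simp]: "pseudo_hyp_dist a a = 0"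
  by (simp add: pseudo_hyp_dist_def)

lemma pseudo_hyp_dist_commute: "pseudo_hyp_dist a b = pseudo_hyp_dist b a"
proof -
  have "cmod (1 - cnj b * a) = cmod (1 - cnj a * b)"
    by (metis complex_cnj_cnj complex_cnj_diff complex_cnj_mult complex_cnj_one complex_mod_cnj
        mult.commute)
  then show ?thesis by (simp add: pseudo_hyp_dist_def norm_minus_commute)
qed

lemma pseudo_hyp_dist_less_1:
  assumes "cmod a < 1" "cmod b < 1"
  shows "pseudo_hyp_dist a b < 1"
proof -
  have "(cmod a)^2 < 1" "(cmod b)^2 < 1" using assms by (simp_all add: abs_square_less_1)
  moreover have "(cmod (1 - cnj b * a))^2 > 0" using one_minus_cnj_mult_nonzero[OF assms] by simp
  ultimately have "1 - (pseudo_hyp_dist a b)^2 > 0"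
    using one_minus_pseudo_hyp_dist_power2[OF assms] by simp
  then have "(pseudo_hyp_dist a b)^2 < 1" by simp
  then show ?thesis using pseudo_hyp_dist_nonneg by (simp add: abs_square_less_1)
qed

lemma tendsto_pseudo_hyp_dist_0:
  assumes "cmod z < 1" and "(g \<longlongrightarrow> z) F"
  shows "((\<lambda>s. pseudo_hyp_dist z (g s)) \<longlongrightarrow> 0) F"
proof -
  have "1 - cnj z * z \<noteq> 0" using one_minus_cnj_mult_nonzero[OF assms(1) assms(1)] .
  then have "((\<lambda>s. cmod (z - g s) / cmod (1 - cnj (g s) * z)) \<longlongrightarrow> cmod (z - z) / cmod (1 - cnj z * z)) F"
    by (intro tendsto_intros assms(2)) auto
  then show ?thesis by (simp add: pseudo_hyp_dist_def)
qed

lemma tanh_artanh_real: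
  assumes "\<bar>p\<bar> < (1::real)"
  shows "tanh (artanh p) = p"
proof -
  have p1: "1 + p > 0" "1 - p > 0" using assms by auto
  have "exp (- 2 * artanh p) = exp (- ln ((1 + p) / (1 - p)))" by (simp add: artanh_def)
  also have "\<dots> = (1 - p) / (1 + p)" using p1 by (simp add: exp_minus)
  finally have e: "exp (- 2 * artanh p) = (1 - p) / (1 + p)" .
  show ?thesis unfolding tanh_real_altdef e using p1 by (simp add: field_simps)
qed

lemma tendsto_hyp_dist_0_iff:
  assumes "\<And>n. a n \<in> unit_disc" "\<And>n. b n \<in> unit_disc"
  shows "(\<lambda>n. hyp_dist (a n) (b n)) \<longlonglongrightarrow> 0 \<longleftrightarrow> (\<lambda>n. pseudo_hyp_dist (a n) (b n)) \<longlonglongrightarrow> 0"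
proof
  assume "(\<lambda>n. hyp_dist (a n) (b n)) \<longlonglongrightarrow> 0"
  then have "(\<lambda>n. tanh (artanh (pseudo_hyp_dist (a n) (b n)))) \<longlonglongrightarrow> tanh 0"
    unfolding hyp_dist_eq_artanh by (intro tendsto_intros) auto
  moreover have "tanh (artanh (pseudo_hyp_dist (a n) (b n))) = pseudo_hyp_dist (a n) (b n)" for n
    using assms pseudo_hyp_dist_less_1 pseudo_hyp_dist_nonneg
    by (intro tanh_artanh_real) (auto simp: unit_disc_def)
  ultimately show "(\<lambda>n. pseudo_hyp_dist (a n) (b n)) \<longlonglongrightarrow> 0" by simp
next
  assume "(\<lambda>n. pseudo_hyp_dist (a n) (b n)) \<longlonglongrightarrow> 0"
  then have "(\<lambda>n. artanh (pseudo_hyp_dist (a n) (b n))) \<longlonglongrightarrow> artanh 0"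
    by (intro tendsto_intros) auto
  then show "(\<lambda>n. hyp_dist (a n) (b n)) \<longlonglongrightarrow> 0" by (simp add: hyp_dist_eq_artanh)
qed

lemma holo_self_map_norm_less_1:
  "holo_self_map f \<Longrightarrow> z \<in> unit_disc \<Longrightarrow> cmod (f z) < 1"
  by (auto simp: holo_self_map_def unit_disc_def image_subset_iff)

lemma Schwarz_Pick:
  assumes f: "holo_self_map f" and a: "a \<in> unit_disc" and b: "b \<in> unit_disc"
  shows "pseudo_hyp_dist (f a) (f b) \<le> pseudo_hyp_dist a b"
proof -
  have hf: "f holomorphic_on ball 0 1" and mf: "f ` ball 0 1 \<subseteq> ball 0 1"
    using f by (auto simp: holo_self_map_def unit_disc_def)
  have na: "cmod a < 1" and nb: "cmod b < 1" using a b by (auto simp: unit_disc_def)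
  have nfa: "cmod (f a) < 1" using mf na by (metis image_subset_iff mem_ball_0)
  define g where "g = Moebius_function 0 (f a) \<circ> f \<circ> Moebius_function 0 (-a)"
  have m1: "Moebius_function 0 (-a) ` ball 0 1 \<subseteq> ball 0 1"
    using Moebius_function_norm_lt_1 na by auto
  have "Moebius_function 0 (f a) \<circ> f holomorphic_on ball 0 1"
    using holomorphic_on_compose_gen[OF hf Moebius_function_holomorphic[OF nfa] mf] .
  then have hg: "g holomorphic_on ball 0 1" unfolding g_def
    using holomorphic_on_compose_gen[OF Moebius_function_holomorphic[of "-a"] _ m1] na by simp
  have g0: "g 0 = 0" by (simp add: g_def Moebius_function_def)
  have gno: "cmod (g z) < 1" if "cmod z < 1" for z
  proof -
    have "cmod (Moebius_function 0 (-a) z) < 1" using Moebius_function_norm_lt_1 na that by simp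
    then have "cmod (f (Moebius_function 0 (-a) z)) < 1" using mf by (auto simp: image_subset_iff)
    then show ?thesis unfolding g_def using Moebius_function_norm_lt_1 nfa by simp
  qed
  define \<xi> where "\<xi> = Moebius_function 0 a b"
  have "cmod \<xi> < 1" unfolding \<xi>_def using Moebius_function_norm_lt_1 na nb by simp
  then have "cmod (g \<xi>) \<le> cmod \<xi>" using Schwarz_Lemma(1)[OF hg g0 gno] by simp
  moreover have "Moebius_function 0 (-a) \<xi> = b"
    unfolding \<xi>_def using Moebius_function_compose[of "-a" a b] na nb by simp
  ultimately have "cmod (Moebius_function 0 (f a) (f b)) \<le> cmod (Moebius_function 0 a b)"
    unfolding g_def \<xi>_def by simp
  then have "pseudo_hyp_dist (f b) (f a) \<le> pseudo_hyp_dist b a"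
    by (simp add: Moebius_function_def pseudo_hyp_dist_def norm_divide)
  then show ?thesis by (simp add: pseudo_hyp_dist_commute)
qed

definition cayley :: "complex \<Rightarrow> complex \<Rightarrow> complex" where
  "cayley \<tau> z = \<i> * (\<tau> + z) / (\<tau> - z)"

definition cayley_inv :: "complex \<Rightarrow> complex \<Rightarrow> complex" where
  "cayley_inv \<tau> X = \<tau> * (X - \<i>) / (X + \<i>)"

lemma boundary_point_minus_nonzero:
  assumes "cmod \<tau> = 1" "cmod z < 1"
  shows "\<tau> - z \<noteq> 0"
  using assms by auto

lemma norm_one_minus_cnj_boundary_mult:
  assumes "cmod \<tau> = 1"
  shows "cmod (1 - cnj \<tau> * w) = cmod (\<tau> - w)"
proof -
  have "cnj \<tau> * \<tau> = 1"
    using assms by (metis complex_norm_square mult.commute norm_one power_one of_real_1)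
  then have "1 - cnj \<tau> * w = cnj \<tau> * (\<tau> - w)" by (simp add: algebra_simps)
  then show ?thesis using assms by (simp add: norm_mult)
qed

lemma Im_cayley:
  assumes t: "cmod \<tau> = 1" and z: "cmod z < 1"
  shows "Im (cayley \<tau> z) = (1 - (cmod z)^2) / (cmod (\<tau> - z))^2"
proof -
  have ne: "cnj (\<tau> - z) \<noteq> 0" using boundary_point_minus_nonzero[OF t z] by simp
  have tt: "(Re \<tau>)^2 + (Im \<tau>)^2 = 1" using t by (metis cmod_power2 power_one)
  have "cayley \<tau> z = \<i> * ((\<tau> + z) * cnj (\<tau> - z)) / ((\<tau> - z) * cnj (\<tau> - z))"
    using ne by (simp add: cayley_def)
  then have "cayley \<tau> z = \<i> * ((\<tau> + z) * cnj (\<tau> - z)) / ((cmod (\<tau> - z))^2)"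
    by (simp only: complex_norm_square)
  then have "Im (cayley \<tau> z) = Re ((\<tau> + z) * cnj (\<tau> - z)) / ((cmod (\<tau> - z))^2)"
    by (simp add: Im_divide_of_real[symmetric] del: Im_divide_of_real)
  also have "Re ((\<tau> + z) * cnj (\<tau> - z)) = 1 - (cmod z)^2"
    using tt unfolding cmod_power2 by (simp add: power2_eq_square algebra_simps)
  finally show ?thesis .
qed

lemma Im_cayley_pos:
  assumes "cmod \<tau> = 1" and "cmod z < 1"
  shows "Im (cayley \<tau> z) > 0"
proof -
  have "(cmod z)^2 < 1" using assms by (simp add: abs_square_less_1)
  moreover have "cmod (\<tau> - z) > 0" using boundary_point_minus_nonzero[OF assms] by simp
  ultimately show ?thesis using Im_cayley[OF assms] by simp
qed

lemma holomorphic_on_cayley: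
  assumes "cmod \<tau> = 1"
  shows "cayley \<tau> holomorphic_on unit_disc"
  unfolding cayley_def
proof (intro holomorphic_intros)
  fix z assume "z \<in> unit_disc"
  then show "\<tau> - z \<noteq> 0" using boundary_point_minus_nonzero[OF assms] by (simp add: unit_disc_def)
qed

lemma pseudo_hyp_dist_cayley:
  assumes t: "cmod \<tau> = 1" and x: "cmod x < 1" and y: "cmod y < 1"
  shows "pseudo_hyp_dist x y
    = cmod (cayley \<tau> x - cayley \<tau> y) / cmod (cayley \<tau> x - cnj (cayley \<tau> y))"
proof -
  have n1: "\<tau> - x \<noteq> 0" and n2: "\<tau> - y \<noteq> 0"
    using boundary_point_minus_nonzero[OF t] x y by auto
  have n2': "cnj \<tau> - cnj y \<noteq> 0" using n2 by (metis complex_cnj_diff complex_cnj_zero_iff)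
  have ct: "cnj \<tau> * \<tau> = 1"
    using t by (metis complex_norm_square mult.commute norm_one power_one of_real_1)
  have diff: "cayley \<tau> x - cayley \<tau> y = 2 * \<i> * \<tau> * (x - y) / ((\<tau> - x) * (\<tau> - y))"
    using n1 n2 by (simp add: cayley_def field_simps)
  have "cayley \<tau> x - cnj (cayley \<tau> y)
      = \<i> * ((\<tau> + x) * (cnj \<tau> - cnj y) + (cnj \<tau> + cnj y) * (\<tau> - x)) / ((\<tau> - x) * (cnj \<tau> - cnj y))"
    using n1 n2' by (simp add: cayley_def field_simps)
  also have "(\<tau> + x) * (cnj \<tau> - cnj y) + (cnj \<tau> + cnj y) * (\<tau> - x) = 2 * (1 - x * cnj y)"
    using ct by (simp add: algebra_simps)
  finally have diff_cnj: "cayley \<tau> x - cnj (cayley \<tau> y)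
      = 2 * \<i> * (1 - x * cnj y) / ((\<tau> - x) * (cnj \<tau> - cnj y))" by simp
  have c2: "cmod (cnj \<tau> - cnj y) = cmod (\<tau> - y)" by (metis complex_cnj_diff complex_mod_cnj)
  have c3: "cmod (1 - x * cnj y) = cmod (1 - cnj y * x)" by (simp add: mult.commute)
  show ?thesis
    unfolding diff diff_cnj pseudo_hyp_dist_def
    using n1 n2 t by (simp add: norm_mult norm_divide c2 c3)
qed

lemma cayley_inv_in_unit_disc:
  assumes "Im X > 0" and t: "cmod \<tau> = 1"
  shows "cayley_inv \<tau> X \<in> unit_disc"
proof -
  have "(cmod (X - \<i>))^2 < (cmod (X + \<i>))^2"
    using assms(1) unfolding cmod_power2 by (simp add: power2_eq_square algebra_simps)
  then have lt: "cmod (X - \<i>) < cmod (X + \<i>)" by (simp add: power_less_imp_less_base)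
  have "X + \<i> \<noteq> 0" using assms(1) by (auto simp: complex_eq_iff)
  then show ?thesis using lt t
    by (simp add: cayley_inv_def unit_disc_def norm_mult norm_divide divide_less_eq)
qed

lemma cayley_cayley_inv:
  assumes "Im X > 0" and t: "cmod \<tau> = 1"
  shows "cayley \<tau> (cayley_inv \<tau> X) = X"
proof -
  have ni: "X + \<i> \<noteq> 0" using assms(1) by (auto simp: complex_eq_iff)
  have nt: "\<tau> \<noteq> 0" using t by auto
  have d: "\<i> * X - 1 \<noteq> 0"
  proof
    assume "\<i> * X - 1 = 0"
    moreover have "X + \<i> = (\<i> * X - 1) * (-\<i>)" by (simp add: algebra_simps)
    ultimately show False using ni by simp
  qed
  have "cayley \<tau> (cayley_inv \<tau> X)
      = (\<i> * (X * (X * (\<tau> * 2))) - X * (\<tau> * 2)) / (\<i> * (X * (\<tau> * 2)) - \<tau> * 2)"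
    using ni nt by (simp add: cayley_def cayley_inv_def field_simps)
  also have "\<dots> = X * ((\<i> * X - 1) * (2 * \<tau>)) / ((\<i> * X - 1) * (2 * \<tau>))"
    by (simp add: algebra_simps)
  also have "\<dots> = X" using d nt by simp
  finally show ?thesis .
qed

lemma holomorphic_on_cayley_inv: "cayley_inv \<tau> holomorphic_on {X. Im X > 0}"
  unfolding cayley_inv_def by (intro holomorphic_intros) (auto simp: complex_eq_iff)

lemma pseudo_hyp_dist_cayley_inv:
  assumes t: "cmod \<tau> = 1" and X: "Im X > 0" and Y: "Im Y > 0"
  shows "pseudo_hyp_dist (cayley_inv \<tau> X) (cayley_inv \<tau> Y) = cmod (X - Y) / cmod (X - cnj Y)"
  using pseudo_hyp_dist_cayley[OF t] cayley_inv_in_unit_disc[OF X t] cayley_inv_in_unit_disc[OF Y t]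
    cayley_cayley_inv[OF X t] cayley_cayley_inv[OF Y t]
  by (simp add: unit_disc_def)

lemma upper_halfplane_Harnack:
  assumes t: "cmod \<tau> = 1" and hg: "g holomorphic_on unit_disc"
    and g_Im: "\<And>x. x \<in> unit_disc \<Longrightarrow> Im (g x) \<ge> 0"
    and p: "p \<in> unit_disc" and q: "q \<in> unit_disc"
    and c: "pseudo_hyp_dist p q \<le> c" "c < 1"
  shows "cmod (g q - g p) \<le> 2 * c / (1 - c) * Im (g p)"
proof -
  have c0: "c \<ge> 0" using c pseudo_hyp_dist_nonneg[of p q] by linarith
  \<comment> \<open>g itself may touch the real axis; g + i\<epsilon> maps into the open half-plane.\<close>
  have approx: "(1 - c) * cmod (g q - g p) \<le> 2 * c * Im (g p) + 2 * c * \<epsilon>" if \<epsilon>: "\<epsilon> > 0" for \<epsilon>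
  proof -
    define h where "h = (\<lambda>x. cayley_inv \<tau> (g x + \<i> * of_real \<epsilon>))"
    have Im_pos: "Im (g x + \<i> * of_real \<epsilon>) > 0" if "x \<in> unit_disc" for x
      using g_Im[OF that] \<epsilon> by simp
    have "(\<lambda>x. g x + \<i> * of_real \<epsilon>) holomorphic_on unit_disc"
      using hg by (intro holomorphic_intros)
    moreover have "(\<lambda>x. g x + \<i> * of_real \<epsilon>) ` unit_disc \<subseteq> {X. Im X > 0}" using Im_pos by auto
    ultimately have "h holomorphic_on unit_disc"
      using holomorphic_on_compose_gen[OF _ holomorphic_on_cayley_inv] by (auto simp: h_def o_def)
    moreover have "h ` unit_disc \<subseteq> unit_disc"
      using cayley_inv_in_unit_disc[OF Im_pos t] by (auto simp: h_def)
    ultimately have "pseudo_hyp_dist (h q) (h p) \<le> pseudo_hyp_dist q p"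
      using Schwarz_Pick q p by (simp add: holo_self_map_def)
    also have "\<dots> \<le> c" using c by (simp add: pseudo_hyp_dist_commute)
    finally have le: "cmod (g q - g p) / cmod (g q + \<i> * \<epsilon> - cnj (g p + \<i> * \<epsilon>)) \<le> c"
      unfolding h_def pseudo_hyp_dist_cayley_inv[OF t Im_pos[OF q] Im_pos[OF p]] by simp
    have "Im (g q + \<i> * \<epsilon> - cnj (g p + \<i> * \<epsilon>)) > 0" using g_Im[OF p] g_Im[OF q] \<epsilon> by simp
    then have pos: "cmod (g q + \<i> * \<epsilon> - cnj (g p + \<i> * \<epsilon>)) > 0" by (auto simp: complex_eq_iff)
    have "cmod (g q - g p) \<le> c * cmod (g q + \<i> * \<epsilon> - cnj (g p + \<i> * \<epsilon>))"
      using le pos by (simp add: divide_le_eq)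
    also have "g q + \<i> * \<epsilon> - cnj (g p + \<i> * \<epsilon>) = (g q - g p) + \<i> * of_real (2 * (Im (g p) + \<epsilon>))"
      by (simp add: complex_eq_iff)
    also have "cmod \<dots> \<le> cmod (g q - g p) + 2 * (Im (g p) + \<epsilon>)"
    proof -
      have "cmod (\<i> * complex_of_real (2 * (Im (g p) + \<epsilon>))) = 2 * (Im (g p) + \<epsilon>)"
        using g_Im[OF p] \<epsilon> by (simp only: norm_mult norm_ii norm_of_real) simp
      then show ?thesis by (metis norm_triangle_ineq)
    qed
    finally have "cmod (g q - g p) \<le> c * (cmod (g q - g p) + 2 * (Im (g p) + \<epsilon>))"
      using c0 by (simp add: mult_left_mono)
    then show ?thesis by (simp add: algebra_simps)
  qed
  have "(1 - c) * cmod (g q - g p) \<le> 2 * c * Im (g p)"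
  proof (rule field_le_epsilon)
    fix e :: real assume e: "e > 0"
    have "(1 - c) * cmod (g q - g p) \<le> 2 * c * Im (g p) + 2 * c * (e / 2)"
      using approx[of "e / 2"] e by simp
    also have "2 * c * (e / 2) \<le> e" using c c0 e by (simp add: mult_left_le_one_le)
    finally show "(1 - c) * cmod (g q - g p) \<le> 2 * c * Im (g p) + e" by simp
  qed
  then show ?thesis using c by (simp add: field_simps)
qed

lemma radius_tendsto_within_stolz_angle:
  assumes t: "cmod \<tau> = 1"
  shows "filterlim (\<lambda>r::real. of_real r * \<tau>) (at \<tau> within stolz_angle \<tau> 2) (at_left 1)"
proof (rule filterlim_at_withinI)
  have "((\<lambda>r::real. of_real r * \<tau>) \<longlongrightarrow> of_real 1 * \<tau>) (at_left 1)"
    by (intro tendsto_intros)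
  then show "((\<lambda>r::real. of_real r * \<tau>) \<longlongrightarrow> \<tau>) (at_left 1)" by simp
  have "eventually (\<lambda>r::real. r \<in> {0<..<1}) (at_left 1)" by (rule eventually_at_left_real) simp
  then show "eventually (\<lambda>r. of_real r * \<tau> \<in> stolz_angle \<tau> 2 - {\<tau>}) (at_left (1::real))"
  proof (rule eventually_mono)
    fix r :: real assume r: "r \<in> {0<..<1}"
    have n: "cmod (of_real r * \<tau>) = r" using r t by (simp add: norm_mult)
    have "\<tau> - of_real r * \<tau> = of_real (1 - r) * \<tau>" by (simp add: algebra_simps)
    then have "cmod (\<tau> - of_real r * \<tau>) = \<bar>1 - r\<bar> * cmod \<tau>" by (simp only: norm_mult norm_of_real)
    then have d: "cmod (\<tau> - of_real r * \<tau>) = 1 - r" using r t by simp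
    have "of_real r * \<tau> \<noteq> \<tau>" using n r t by auto
    then show "of_real r * \<tau> \<in> stolz_angle \<tau> 2 - {\<tau>}"
      using r n d by (auto simp: stolz_angle_def unit_disc_def)
  qed
qed

text \<open>Schwarz-Pick between z and the radial point r\<tau>, divided by 1 - r^2; as r \<rightarrow> 1 the
  last factor tends to the angular derivative.\<close>

lemma Julia_radial_estimate:
  assumes f: "holo_self_map f" and t: "cmod \<tau> = 1" and z: "z \<in> unit_disc"
    and r: "0 < r" "r < 1"
  defines "b \<equiv> of_real r * \<tau>"
  shows "(1 - (cmod z)^2) / (cmod (1 - cnj b * z))^2
    \<le> (1 - (cmod (f z))^2) / (cmod (1 - cnj (f b) * f z))^2
        * (2 / (1 + r) * cmod ((f b - \<tau>) / (b - \<tau>)))"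
    (is "?B \<le> ?A * ?Q")
proof -
  have nz: "cmod z < 1" using z by (simp add: unit_disc_def)
  have nb: "cmod b = r" using r t by (simp add: b_def norm_mult)
  then have nbl: "cmod b < 1" and bD: "b \<in> unit_disc" using r by (simp_all add: unit_disc_def)
  then have nfb: "cmod (f b) < 1" and nfz: "cmod (f z) < 1"
    using holo_self_map_norm_less_1[OF f] z by auto
  have "pseudo_hyp_dist (f z) (f b) \<le> pseudo_hyp_dist z b" using Schwarz_Pick[OF f z bD] .
  then have "(pseudo_hyp_dist (f z) (f b))^2 \<le> (pseudo_hyp_dist z b)^2"
    using pseudo_hyp_dist_nonneg by (simp add: power_mono)
  then have "1 - (pseudo_hyp_dist z b)^2 \<le> 1 - (pseudo_hyp_dist (f z) (f b))^2" by simp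
  then have "(1 - (cmod z)^2) * (1 - r^2) / (cmod (1 - cnj b * z))^2
      \<le> (1 - (cmod (f z))^2) * (1 - (cmod (f b))^2) / (cmod (1 - cnj (f b) * f z))^2"
    unfolding one_minus_pseudo_hyp_dist_power2[OF nz nbl] one_minus_pseudo_hyp_dist_power2[OF nfz nfb]
    using nb r by simp
  then have "?B * (1 - r^2) \<le> ?A * (1 - (cmod (f b))^2)"
    by (simp add: field_simps)
  also have "1 - (cmod (f b))^2 \<le> ?Q * (1 - r^2)"
  proof -
    have "b - \<tau> = of_real (r - 1) * \<tau>" by (simp add: b_def algebra_simps)
    then have "cmod (b - \<tau>) = \<bar>r - 1\<bar> * cmod \<tau>" by (simp only: norm_mult norm_of_real)
    then have "cmod (b - \<tau>) = 1 - r" using r t by simp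
    then have "?Q = 2 / (1 + r) * (cmod (f b - \<tau>) / (1 - r))" by (simp only: norm_divide)
    moreover have "1 - r^2 = (1 + r) * (1 - r)" by (simp add: power2_eq_square algebra_simps)
    ultimately have "?Q * (1 - r^2) = 2 / (1 + r) * (cmod (f b - \<tau>) / (1 - r)) * ((1 + r) * (1 - r))"
      by (simp only:)
    also have "\<dots> = 2 * cmod (f b - \<tau>)" using r by simp
    finally have Q: "?Q * (1 - r^2) = 2 * cmod (f b - \<tau>)" .
    have "1 - (cmod (f b))^2 = (1 - cmod (f b)) * (1 + cmod (f b))"
      by (simp add: power2_eq_square algebra_simps)
    also have "\<dots> \<le> 2 * (1 - cmod (f b))"
      using nfb by (subst mult.commute, intro mult_right_mono) auto
    also have "1 - cmod (f b) \<le> cmod (f b - \<tau>)"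
      using norm_triangle_ineq2[of \<tau> "f b"] t by (simp add: norm_minus_commute)
    finally show ?thesis using Q by simp
  qed
  then have "?A * (1 - (cmod (f b))^2) \<le> ?A * (?Q * (1 - r^2))"
    using nfz by (intro mult_left_mono) (auto simp: abs_square_le_1)
  finally have "?B * (1 - r^2) \<le> (?A * ?Q) * (1 - r^2)" by (simp add: mult.assoc)
  moreover have "1 - r^2 > 0" using r by (simp add: abs_square_less_1)
  ultimately show ?thesis by (rule mult_right_le_imp_le)
qed

lemma Julia_Im_cayley_mono:
  assumes f: "holo_self_map f" and t: "cmod \<tau> = 1" and ad: "angular_derivative f \<tau> 1"
    and z: "z \<in> unit_disc"
  shows "Im (cayley \<tau> z) \<le> Im (cayley \<tau> (f z))"
proof -
  have nz: "cmod z < 1" and nfz: "cmod (f z) < 1"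
    using holo_self_map_norm_less_1[OF f z] z by (auto simp: unit_disc_def)
  let ?b = "\<lambda>r::real. of_real r * \<tau>"
  have lim_b: "filterlim ?b (at \<tau> within stolz_angle \<tau> 2) (at_left 1)"
    using radius_tendsto_within_stolz_angle[OF t] .
  have "(f \<longlongrightarrow> \<tau>) (at \<tau> within stolz_angle \<tau> 2)"
    and "((\<lambda>w. (f w - \<tau>) / (w - \<tau>)) \<longlongrightarrow> 1) (at \<tau> within stolz_angle \<tau> 2)"
    using ad by (simp_all add: angular_derivative_def angular_limit_def)
  then have fb: "((\<lambda>r. f (?b r)) \<longlongrightarrow> \<tau>) (at_left 1)"
    and qb: "((\<lambda>r. (f (?b r) - \<tau>) / (?b r - \<tau>)) \<longlongrightarrow> 1) (at_left 1)"
    using filterlim_compose lim_b by (blast, fastforce)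
  have ne1: "1 - cnj \<tau> * f z \<noteq> 0" and ne2: "1 - cnj \<tau> * z \<noteq> 0"
    using norm_one_minus_cnj_boundary_mult[OF t] boundary_point_minus_nonzero[OF t] nz nfz
    by (metis norm_eq_zero)+
  have "((\<lambda>r. (1 - (cmod (f z))^2) / (cmod (1 - cnj (f (?b r)) * f z))^2
        * (2 / (1 + r) * cmod ((f (?b r) - \<tau>) / (?b r - \<tau>))))
      \<longlongrightarrow> (1 - (cmod (f z))^2) / (cmod (1 - cnj \<tau> * f z))^2 * (2 / (1 + 1) * cmod (1::complex)))
      (at_left 1)"
    using ne1 by (intro tendsto_intros fb qb) auto
  moreover have "((\<lambda>r. (1 - (cmod z)^2) / (cmod (1 - cnj (?b r) * z))^2)
      \<longlongrightarrow> (1 - (cmod z)^2) / (cmod (1 - cnj (of_real 1 * \<tau>) * z))^2) (at_left 1)"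
    using ne2 by (intro tendsto_intros) auto
  moreover have "eventually (\<lambda>r. (1 - (cmod z)^2) / (cmod (1 - cnj (?b r) * z))^2
      \<le> (1 - (cmod (f z))^2) / (cmod (1 - cnj (f (?b r)) * f z))^2
        * (2 / (1 + r) * cmod ((f (?b r) - \<tau>) / (?b r - \<tau>)))) (at_left (1::real))"
    using eventually_at_left_real[of 0 "1::real"]
    by (rule eventually_mono) (use Julia_radial_estimate[OF f t z] in auto)
  ultimately have "(1 - (cmod z)^2) / (cmod (1 - cnj (of_real 1 * \<tau>) * z))^2
      \<le> (1 - (cmod (f z))^2) / (cmod (1 - cnj \<tau> * f z))^2 * (2 / (1 + 1) * cmod (1::complex))"
    by (rule tendsto_le[OF trivial_limit_at_left_real])
  then show ?thesis
    using norm_one_minus_cnj_boundary_mult[OF t] Im_cayley[OF t nz] Im_cayley[OF t nfz] by simp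
qed

lemma nat_floor_divide_mult_le:
  assumes "0 \<le> r" "0 < h"
  shows "real (nat \<lfloor>r / h\<rfloor>) * h \<le> r" and "r < real (nat \<lfloor>r / h\<rfloor>) * h + h"
proof -
  have "real (nat \<lfloor>r / h\<rfloor>) = of_int \<lfloor>r / h\<rfloor>" using assms by simp
  then have "real (nat \<lfloor>r / h\<rfloor>) \<le> r / h" "r / h < real (nat \<lfloor>r / h\<rfloor>) + 1" by linarith+
  then show "real (nat \<lfloor>r / h\<rfloor>) * h \<le> r" "r < real (nat \<lfloor>r / h\<rfloor>) * h + h"
    using assms by (simp_all add: le_divide_eq divide_less_eq algebra_simps)
qed

lemma filterlim_nat_floor_divide_at_top:
  assumes "h > 0"
  shows "filterlim (\<lambda>s::real. nat \<lfloor>s / h\<rfloor>) sequentially at_top"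
proof -
  have "filterlim (\<lambda>s::real. s * (1 / h)) at_top at_top"
    using filterlim_at_top_mult_tendsto_pos[OF tendsto_const[of "1/h"] _ filterlim_ident] assms
    by simp
  then have "filterlim (\<lambda>s::real. \<lfloor>s / h\<rfloor>) at_top at_top"
    using filterlim_compose[OF filterlim_floor_sequentially] by simp
  then show ?thesis using filterlim_compose[OF filterlim_nat_sequentially] by blast
qed

lemma one_minus_norm_ge_if_pseudo_hyp_dist_le_half:
  assumes a: "cmod a < 1" and b: "cmod b < 1" and p: "pseudo_hyp_dist a b \<le> 1/2"
  shows "1 - cmod a \<ge> 3/16 * (1 - cmod b)"
proof -
  have "(pseudo_hyp_dist a b)^2 \<le> (1/2)^2"
    using p pseudo_hyp_dist_nonneg[of a b] by (intro power_mono)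
  then have q: "1 - (pseudo_hyp_dist a b)^2 \<ge> 3/4" by (simp add: power2_eq_square)
  have "cmod (cnj b * a) \<le> cmod b" using a by (simp add: norm_mult mult_left_le)
  then have "cmod (1 - cnj b * a) \<ge> 1 - cmod b" using norm_triangle_ineq2[of 1 "cnj b * a"] by simp
  then have d: "(1 - cmod b)^2 \<le> (cmod (1 - cnj b * a))^2" using b by (intro power_mono) auto
  have b2: "1 - (cmod b)^2 = (1 - cmod b) * (1 + cmod b)" by (simp add: power2_eq_square algebra_simps)
  have pb: "1 - cmod b > 0" using b by simp
  have "1 - (cmod a)^2
      = (1 - (pseudo_hyp_dist a b)^2) * (cmod (1 - cnj b * a))^2 / (1 - (cmod b)^2)"
  proof -
    have "1 - (cmod b)^2 > 0" using b by (simp add: abs_square_less_1)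
    then show ?thesis using one_minus_pseudo_hyp_dist_power2[OF a b] one_minus_cnj_mult_nonzero[OF a b]
      by (simp add: field_simps)
  qed
  also have "\<dots> \<ge> 3/4 * (1 - cmod b)^2 / (1 - (cmod b)^2)"
    using q d b2 pb by (intro divide_right_mono mult_mono) auto
  also have "3/4 * (1 - cmod b)^2 / (1 - (cmod b)^2) = 3/4 * ((1 - cmod b) / (1 + cmod b))"
    using pb unfolding b2 by (simp add: power2_eq_square)
  finally have "1 - (cmod a)^2 \<ge> 3/4 * ((1 - cmod b) / (1 + cmod b))" .
  moreover have "3/4 * ((1 - cmod b) / (1 + cmod b)) \<ge> 3/4 * ((1 - cmod b) / 2)"
    using b by (intro mult_left_mono divide_left_mono) (auto intro: add_pos_nonneg)
  ultimately have "3/4 * ((1 - cmod b) / 2) \<le> 1 - (cmod a)^2" by (rule order_trans[rotated])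
  moreover have "1 - (cmod a)^2 \<le> 2 * (1 - cmod a)"
  proof -
    have "1 - (cmod a)^2 = (1 - cmod a) * (1 + cmod a)" by (simp add: power2_eq_square algebra_simps)
    also have "\<dots> \<le> (1 - cmod a) * 2" using a by (intro mult_left_mono) auto
    finally show ?thesis by simp
  qed
  ultimately show ?thesis by (simp add: field_simps)
qed

lemma pseudo_hyp_dist_le_if_one_minus_norm_ge:
  assumes z: "cmod z < 1" and \<beta>: "\<beta> > 0"
  obtains c where "c < 1"
    and "\<And>w. cmod w < 1 \<Longrightarrow> \<beta> \<le> 1 - cmod w \<Longrightarrow> pseudo_hyp_dist z w \<le> c"
proof
  have z2: "1 - (cmod z)^2 > 0" using z by (simp add: abs_square_less_1)
  show "sqrt (1 - (1 - (cmod z)^2) * \<beta> / 4) < 1" using z2 \<beta> by simp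
  fix w assume w: "cmod w < 1" and bw: "\<beta> \<le> 1 - cmod w"
  have "1 - (cmod w)^2 = (1 - cmod w) * (1 + cmod w)" by (simp add: power2_eq_square algebra_simps)
  also have "\<dots> \<ge> (1 - cmod w) * 1" using w by (intro mult_left_mono) auto
  finally have w2: "1 - (cmod w)^2 \<ge> \<beta>" using bw by simp
  have "cmod (cnj w * z) \<le> 1" using z w by (simp add: norm_mult mult_le_one)
  then have "cmod (1 - cnj w * z) \<le> 2" using norm_triangle_ineq4[of 1 "cnj w * z"] by simp
  then have d2: "(cmod (1 - cnj w * z))^2 \<le> 2^2" by (intro power_mono) auto
  have "(1 - (cmod z)^2) * \<beta> / 4
      \<le> (1 - (cmod z)^2) * (1 - (cmod w)^2) / (cmod (1 - cnj w * z))^2"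
    using z2 w2 \<beta> d2 one_minus_cnj_mult_nonzero[OF z w] by (intro frac_le) auto
  then have "(pseudo_hyp_dist z w)^2 \<le> 1 - (1 - (cmod z)^2) * \<beta> / 4"
    using one_minus_pseudo_hyp_dist_power2[OF z w] by linarith
  then show "pseudo_hyp_dist z w \<le> sqrt (1 - (1 - (cmod z)^2) * \<beta> / 4)"
    by (rule real_le_rsqrt)
qed

lemma norm_diff_power2_le_if_pseudo_hyp_dist_le:
  assumes a: "cmod a < 1" and b: "cmod b < 1" and p: "pseudo_hyp_dist a b \<le> c" and c: "c < 1"
  shows "(cmod (a - b))^2 \<le> (1 - (cmod b)^2) / (1 - c^2)"
proof -
  have p0: "pseudo_hyp_dist a b \<ge> 0" by (rule pseudo_hyp_dist_nonneg)
  have dp: "cmod (1 - cnj b * a) > 0" using one_minus_cnj_mult_nonzero[OF a b] by simp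
  have c2: "c^2 < 1" using p0 p c by (simp add: abs_square_less_1)
  have pc: "(pseudo_hyp_dist a b)^2 \<le> c^2" using p p0 by (simp add: power_mono)
  have pos: "1 - (pseudo_hyp_dist a b)^2 > 0" using pc c2 by simp
  have "(1 - (pseudo_hyp_dist a b)^2) * (cmod (1 - cnj b * a))^2 = (1 - (cmod a)^2) * (1 - (cmod b)^2)"
    using one_minus_pseudo_hyp_dist_power2[OF a b] dp by simp
  then have "(cmod (1 - cnj b * a))^2 = (1 - (cmod a)^2) * (1 - (cmod b)^2) / (1 - (pseudo_hyp_dist a b)^2)"
    using pos by (simp add: eq_divide_eq mult.commute)
  moreover have "(cmod (a - b))^2 = (pseudo_hyp_dist a b)^2 * (cmod (1 - cnj b * a))^2"
    using dp by (simp add: pseudo_hyp_dist_def power_divide)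
  ultimately have "(cmod (a - b))^2
      = (pseudo_hyp_dist a b)^2 * ((1 - (cmod a)^2) * (1 - (cmod b)^2)) / (1 - (pseudo_hyp_dist a b)^2)"
    by simp
  also have "\<dots> \<le> (1 - (cmod b)^2) / (1 - (pseudo_hyp_dist a b)^2)"
  proof (rule divide_right_mono)
    have a2: "0 \<le> 1 - (cmod a)^2" "1 - (cmod a)^2 \<le> 1" and b2: "0 \<le> 1 - (cmod b)^2"
      using a b by (simp_all add: abs_square_le_1)
    have "(pseudo_hyp_dist a b)^2 * ((1 - (cmod a)^2) * (1 - (cmod b)^2))
        \<le> (1 - (cmod a)^2) * (1 - (cmod b)^2)"
      using a2 b2 pc c2 by (intro mult_left_le_one_le) auto
    also have "\<dots> \<le> 1 - (cmod b)^2" using a2 b2 by (intro mult_left_le_one_le)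
    finally show "(pseudo_hyp_dist a b)^2 * ((1 - (cmod a)^2) * (1 - (cmod b)^2)) \<le> 1 - (cmod b)^2" .
  qed (use pos in simp)
  also have "\<dots> \<le> (1 - (cmod b)^2) / (1 - c^2)"
    using pc c2 b by (intro divide_left_mono) (auto simp: abs_square_le_1 mult_pos_pos)
  finally show ?thesis .
qed

lemma tendsto_boundary_if_pseudo_hyp_dist_bounded:
  assumes "\<And>n. cmod (a n) < 1" "\<And>n. cmod (b n) < 1"
    and "\<And>n. pseudo_hyp_dist (a n) (b n) \<le> c" "c < 1"
    and b: "b \<longlonglongrightarrow> \<tau>" and "cmod \<tau> = 1"
  shows "a \<longlonglongrightarrow> \<tau>"
proof -
  have "0 \<le> c" using assms(3)[of 0] pseudo_hyp_dist_nonneg[of "a 0" "b 0"] by linarith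
  then have "c^2 < 1" using assms(4) by (simp add: abs_square_less_1)
  then have c2: "1 - c^2 \<noteq> 0" by simp
  have "(\<lambda>n. sqrt ((1 - (cmod (b n))^2) / (1 - c^2))) \<longlonglongrightarrow> sqrt ((1 - (cmod \<tau>)^2) / (1 - c^2))"
    by (intro tendsto_intros b) (fact c2)
  then have sq0: "(\<lambda>n. sqrt ((1 - (cmod (b n))^2) / (1 - c^2))) \<longlonglongrightarrow> 0"
    using assms(6) by simp
  have close: "cmod (a n - b n) \<le> sqrt ((1 - (cmod (b n))^2) / (1 - c^2))" for n
    using norm_diff_power2_le_if_pseudo_hyp_dist_le[OF assms(1-4)] by (rule real_le_rsqrt)
  have "(\<lambda>n. a n - b n) \<longlonglongrightarrow> 0"
    by (rule tendsto_norm_zero_cancel, rule tendsto_sandwich[OF _ _ tendsto_const sq0])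
      (use close in auto)
  then have "(\<lambda>n. (a n - b n) + b n) \<longlonglongrightarrow> 0 + \<tau>" by (intro tendsto_intros b)
  then show ?thesis by simp
qed

lemma holo_semigroup_self_map: "holo_semigroup phi \<Longrightarrow> t \<ge> 0 \<Longrightarrow> holo_self_map (phi t)"
  by (simp add: holo_semigroup_def)

lemma holo_semigroup_in_unit_disc:
  "holo_semigroup phi \<Longrightarrow> t \<ge> 0 \<Longrightarrow> z \<in> unit_disc \<Longrightarrow> phi t z \<in> unit_disc"
  by (auto simp: holo_semigroup_def holo_self_map_def)

lemma holo_semigroup_0: "holo_semigroup phi \<Longrightarrow> z \<in> unit_disc \<Longrightarrow> phi 0 z = z"
  by (simp add: holo_semigroup_def)

lemma holo_semigroup_add:
  "holo_semigroup phi \<Longrightarrow> t \<ge> 0 \<Longrightarrow> s \<ge> 0 \<Longrightarrow> z \<in> unit_disc \<Longrightarrow> phi (t + s) z = phi t (phi s z)"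
  by (simp add: holo_semigroup_def)

lemma holo_semigroup_funpow:
  assumes sg: "holo_semigroup phi" and "t \<ge> 0" "z \<in> unit_disc"
  shows "(phi t ^^ n) z = phi (real n * t) z"
proof (induction n)
  case 0 then show ?case using holo_semigroup_0[OF sg assms(3)] by simp
next
  case (Suc n)
  have "(phi t ^^ Suc n) z = phi t (phi (real n * t) z)" using Suc by simp
  also have "\<dots> = phi (t + real n * t) z" using holo_semigroup_add[OF sg] assms by simp
  finally show ?case by (simp add: algebra_simps)
qed

lemma holo_semigroup_tendsto_at_right_0:
  assumes "holo_semigroup phi" "z \<in> unit_disc"
  shows "((\<lambda>s. phi s z) \<longlongrightarrow> z) (at_right 0)"
proof -
  have "compact {z} \<and> {z} \<subseteq> unit_disc" using assms(2) by simp
  then have "uniform_limit {z} phi (\<lambda>z. z) (at_right 0)"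
    using assms(1) unfolding holo_semigroup_def by blast
  from tendsto_uniform_limitI[OF this, of z] show ?thesis by simp
qed

lemma holo_semigroup_small_step:
  assumes sg: "holo_semigroup phi" and z: "z \<in> unit_disc" and "\<epsilon> > 0"
  obtains h where "h > 0" "\<And>a. 0 \<le> a \<Longrightarrow> a \<le> h \<Longrightarrow> pseudo_hyp_dist z (phi a z) \<le> \<epsilon>"
proof -
  have "((\<lambda>s. pseudo_hyp_dist z (phi s z)) \<longlongrightarrow> 0) (at_right 0)"
    using tendsto_pseudo_hyp_dist_0 holo_semigroup_tendsto_at_right_0[OF sg z] z
    by (simp add: unit_disc_def)
  then have "eventually (\<lambda>s. pseudo_hyp_dist z (phi s z) < \<epsilon>) (at_right 0)"
    using assms(3) by (simp add: order_tendstoD)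
  then obtain d where d: "d > 0" "\<And>s. 0 < s \<Longrightarrow> s < d \<Longrightarrow> pseudo_hyp_dist z (phi s z) < \<epsilon>"
    by (auto simp: eventually_at_right_field)
  show ?thesis
  proof
    show "d / 2 > 0" using d by simp
    fix a assume "0 \<le> a" "a \<le> d / 2"
    then show "pseudo_hyp_dist z (phi a z) \<le> \<epsilon>"
      using d holo_semigroup_0[OF sg z] assms(3) by (cases "a = 0") (auto intro: less_imp_le)
  qed
qed

lemma holo_semigroup_commute:
  assumes "holo_semigroup phi" "a \<ge> 0" "b \<ge> 0" "z \<in> unit_disc"
  shows "phi a (phi b z) = phi b (phi a z)"
  using holo_semigroup_add[OF assms] holo_semigroup_add[OF assms(1,3,2,4)] by (simp add: add.commute)

lemma holo_semigroup_pseudo_hyp_dist_orbit_step: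
  assumes sg: "holo_semigroup phi" and z: "z \<in> unit_disc" and "s \<ge> 0" "a \<ge> 0"
  shows "pseudo_hyp_dist (phi s z) (phi a (phi s z)) \<le> pseudo_hyp_dist z (phi a z)"
proof -
  have "phi a (phi s z) = phi s (phi a z)" by (rule holo_semigroup_commute[OF sg assms(4,3) z])
  then show ?thesis
    using Schwarz_Pick[OF holo_semigroup_self_map[OF sg assms(3)] z holo_semigroup_in_unit_disc[OF sg assms(4) z]]
    by simp
qed

text \<open>Each step of length at most h shrinks the distance to the boundary at most by the factor
  3/16, so on [0, T] it stays above (3/16)^(T/h + 1) (1 - |z|).\<close>

lemma holo_semigroup_orbit_bounded_away:
  assumes sg: "holo_semigroup phi" and z: "z \<in> unit_disc"
  obtains \<beta> where "\<beta> > 0" "\<And>r. 0 \<le> r \<Longrightarrow> r \<le> T \<Longrightarrow> \<beta> \<le> 1 - cmod (phi r z)"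
proof -
  have nz: "cmod z < 1" using z by (simp add: unit_disc_def)
  obtain h where h: "h > 0" "\<And>a. 0 \<le> a \<Longrightarrow> a \<le> h \<Longrightarrow> pseudo_hyp_dist z (phi a z) \<le> 1/2"
    using holo_semigroup_small_step[OF sg z, of "1/2"] by auto
  have nphi: "cmod (phi s z) < 1" if "s \<ge> 0" for s
    using holo_semigroup_in_unit_disc[OF sg that z] by (simp add: unit_disc_def)
  have step: "3/16 * (1 - cmod (phi s z)) \<le> 1 - cmod (phi (s + a) z)"
    if "s \<ge> 0" "0 \<le> a" "a \<le> h" for s a
  proof (rule one_minus_norm_ge_if_pseudo_hyp_dist_le_half)
    show "cmod (phi (s + a) z) < 1" "cmod (phi s z) < 1" using nphi that by simp_all
    have "pseudo_hyp_dist (phi s z) (phi a (phi s z)) \<le> 1/2"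
      using holo_semigroup_pseudo_hyp_dist_orbit_step[OF sg z] h(2) that by (meson order_trans)
    moreover have "phi (s + a) z = phi a (phi s z)"
      using holo_semigroup_add[OF sg, of a s z] that z by (simp add: add.commute)
    ultimately show "pseudo_hyp_dist (phi (s + a) z) (phi s z) \<le> 1/2"
      by (simp add: pseudo_hyp_dist_commute)
  qed
  have iter: "(3/16)^j * (1 - cmod z) \<le> 1 - cmod (phi (real j * h) z)" for j
  proof (induction j)
    case 0 then show ?case using holo_semigroup_0[OF sg z] by simp
  next
    case (Suc j)
    have "(3/16)^Suc j * (1 - cmod z) \<le> 3/16 * (1 - cmod (phi (real j * h) z))"
      using mult_left_mono[OF Suc, of "3/16"] by (simp add: mult.assoc)
    also have "\<dots> \<le> 1 - cmod (phi (real j * h + h) z)" using step h(1) by simp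
    finally show ?case by (simp add: algebra_simps)
  qed
  define N where "N = nat \<lfloor>T / h\<rfloor>"
  show ?thesis
  proof
    show "(3/16)^(N+1) * (1 - cmod z) > 0" using nz by simp
    fix r assume r: "0 \<le> r" "r \<le> T"
    define j where "j = nat \<lfloor>r / h\<rfloor>"
    have j: "real j * h \<le> r" "r < real j * h + h"
      unfolding j_def using nat_floor_divide_mult_le[OF r(1) h(1)] by simp_all
    have "j \<le> N"
      unfolding j_def N_def using r h(1) by (intro nat_mono floor_mono divide_right_mono) auto
    then have "(3/16::real)^(N+1) \<le> (3/16)^(j+1)" by (intro power_decreasing) auto
    then have "(3/16)^(N+1) * (1 - cmod z) \<le> 3/16 * ((3/16)^j * (1 - cmod z))"
      using nz by (simp add: mult_right_mono)
    also have "\<dots> \<le> 3/16 * (1 - cmod (phi (real j * h) z))" by (rule mult_left_mono[OF iter]) simp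
    also have "\<dots> \<le> 1 - cmod (phi (real j * h + (r - real j * h)) z)"
      using j h(1) by (intro step) auto
    finally show "(3/16)^(N+1) * (1 - cmod z) \<le> 1 - cmod (phi r z)" by simp
  qed
qed

lemma holo_semigroup_pseudo_hyp_dist_bounded:
  assumes sg: "holo_semigroup phi" and z: "z \<in> unit_disc"
  obtains c where "c < 1" "\<And>r. 0 \<le> r \<Longrightarrow> r \<le> T \<Longrightarrow> pseudo_hyp_dist z (phi r z) \<le> c"
proof -
  obtain \<beta> where \<beta>: "\<beta> > 0" "\<And>r. 0 \<le> r \<Longrightarrow> r \<le> T \<Longrightarrow> \<beta> \<le> 1 - cmod (phi r z)"
    using holo_semigroup_orbit_bounded_away[OF sg z] by blast
  obtain c where "c < 1"
    and "\<And>w. cmod w < 1 \<Longrightarrow> \<beta> \<le> 1 - cmod w \<Longrightarrow> pseudo_hyp_dist z w \<le> c"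
    using pseudo_hyp_dist_le_if_one_minus_norm_ge[of z \<beta>] z \<beta>(1) by (auto simp: unit_disc_def)
  then show ?thesis
    using that \<beta>(2) holo_semigroup_in_unit_disc[OF sg _ z] by (auto simp: unit_disc_def)
qed

lemma boundary_DW_point_tendsto:
  assumes "boundary_DW_point f \<tau>" "z \<in> unit_disc"
  shows "(\<lambda>n. (f ^^ n) z) \<longlonglongrightarrow> \<tau>"
proof -
  have "compact {z} \<and> {z} \<subseteq> unit_disc" using assms(2) by simp
  then have "uniform_limit {z} (\<lambda>n. f ^^ n) (\<lambda>_. \<tau>) sequentially"
    using assms(1) unfolding boundary_DW_point_def by blast
  from tendsto_uniform_limitI[OF this, of z] show ?thesis by simp
qed

text \<open>The orbit of 0 under multiples of v stays at bounded pseudo-hyperbolic distance from its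
  orbit under multiples of t, so both tend to the same boundary point.\<close>

lemma holo_semigroup_boundary_DW_point_unique:
  assumes sg: "holo_semigroup phi" and "t > 0" "v > 0"
    and "boundary_DW_point (phi t) \<tau>" "boundary_DW_point (phi v) \<tau>'"
  shows "\<tau>' = \<tau>"
proof -
  have z: "(0::complex) \<in> unit_disc" by (simp add: unit_disc_def)
  define m where "m n = nat \<lfloor>real n * v / t\<rfloor>" for n
  define a where "a n = phi (real n * v) 0" for n
  define b where "b n = phi (real (m n) * t) 0" for n
  have "(\<lambda>n. phi (real n * t) 0) \<longlonglongrightarrow> \<tau>"
    using boundary_DW_point_tendsto[OF assms(4) z] holo_semigroup_funpow[OF sg _ z] assms(2) by simp
  moreover have "filterlim m sequentially sequentially"
  proof -
    have "filterlim (\<lambda>n. real n * v) at_top sequentially"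
      using filterlim_at_top_mult_tendsto_pos[OF tendsto_const _ filterlim_real_sequentially] assms(3)
      by (simp add: mult.commute)
    then show ?thesis
      unfolding m_def using filterlim_compose[OF filterlim_nat_floor_divide_at_top[OF assms(2)]]
      by blast
  qed
  ultimately have b_lim: "b \<longlonglongrightarrow> \<tau>" unfolding b_def by (rule filterlim_compose)
  obtain c where c: "c < 1" "\<And>r. 0 \<le> r \<Longrightarrow> r \<le> t \<Longrightarrow> pseudo_hyp_dist 0 (phi r 0) \<le> c"
    using holo_semigroup_pseudo_hyp_dist_bounded[OF sg z] by blast
  have "pseudo_hyp_dist (a n) (b n) \<le> c" for n
  proof -
    define r where "r = real n * v - real (m n) * t"
    have r: "0 \<le> r" "r \<le> t"
      using nat_floor_divide_mult_le[of "real n * v" t] assms(2,3) by (auto simp: r_def m_def)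
    have mt: "real (m n) * t \<ge> 0" using assms(2) by simp
    have "a n = phi (real (m n) * t) (phi r 0)"
      unfolding a_def using holo_semigroup_add[OF sg mt r(1) z] by (simp add: r_def)
    then have "pseudo_hyp_dist (a n) (b n) \<le> pseudo_hyp_dist (phi r 0) 0"
      unfolding b_def
      using Schwarz_Pick[OF holo_semigroup_self_map[OF sg mt] holo_semigroup_in_unit_disc[OF sg r(1) z] z]
      by simp
    also have "\<dots> \<le> c" using c(2) r by (simp add: pseudo_hyp_dist_commute)
    finally show ?thesis .
  qed
  moreover have "cmod (a n) < 1" "cmod (b n) < 1" for n
    unfolding a_def b_def using holo_semigroup_in_unit_disc[OF sg _ z] assms(2,3)
    by (auto simp: unit_disc_def)
  moreover have "a \<longlonglongrightarrow> \<tau>'"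
    using boundary_DW_point_tendsto[OF assms(5) z] holo_semigroup_funpow[OF sg _ z] assms(3)
    by (simp add: a_def[abs_def])
  moreover have "cmod \<tau> = 1" using assms(4) by (simp add: boundary_DW_point_def)
  ultimately show ?thesis
    using tendsto_boundary_if_pseudo_hyp_dist_bounded[OF _ _ _ c(1) b_lim] LIMSEQ_unique by blast
qed

lemma holo_semigroup_step_tendsto_at_top:
  assumes sg: "holo_semigroup phi" and t: "t > 0" and z: "z \<in> unit_disc" and v: "v \<ge> 0"
    and lim: "(\<lambda>n. pseudo_hyp_dist (phi v (phi (real n * t) z)) (phi (real n * t) z)) \<longlonglongrightarrow> 0"
  shows "((\<lambda>s. pseudo_hyp_dist (phi v (phi s z)) (phi s z)) \<longlongrightarrow> 0) at_top"
proof -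
  define m where "m s = nat \<lfloor>s / t\<rfloor>" for s
  define p where "p n = phi (real n * t) z" for n
  have pD: "p n \<in> unit_disc" for n unfolding p_def using holo_semigroup_in_unit_disc[OF sg _ z] t by simp
  have le: "pseudo_hyp_dist (phi v (phi s z)) (phi s z) \<le> pseudo_hyp_dist (phi v (p (m s))) (p (m s))"
    if s: "s \<ge> 0" for s
  proof -
    define s' where "s' = s - real (m s) * t"
    have s': "s' \<ge> 0" using nat_floor_divide_mult_le[OF s t] by (simp add: s'_def m_def)
    have mt: "real (m s) * t \<ge> 0" using t by simp
    have ws: "phi s z = phi s' (p (m s))"
      unfolding p_def using holo_semigroup_add[OF sg s' mt z] by (simp add: s'_def)
    show ?thesis
      unfolding ws holo_semigroup_commute[OF sg v s' pD]
      by (rule Schwarz_Pick[OF holo_semigroup_self_map[OF sg s'] holo_semigroup_in_unit_disc[OF sg v pD] pD])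
  qed
  show ?thesis
  proof (rule tendsto_sandwich[OF _ _ tendsto_const])
    show "((\<lambda>s. pseudo_hyp_dist (phi v (p (m s))) (p (m s))) \<longlongrightarrow> 0) at_top"
      using filterlim_compose[OF lim[folded p_def] filterlim_nat_floor_divide_at_top[OF t]]
      by (simp add: m_def)
    show "eventually (\<lambda>s. pseudo_hyp_dist (phi v (phi s z)) (phi s z)
        \<le> pseudo_hyp_dist (phi v (p (m s))) (p (m s))) at_top"
      using eventually_ge_at_top[of "0::real"] by (rule eventually_mono) (rule le)
  qed (simp add: pseudo_hyp_dist_nonneg)
qed

lemma tendsto_0_if_le_eps_plus_mult:
  fixes f g :: "'a \<Rightarrow> real"
  assumes "(g \<longlongrightarrow> 0) F" and "\<And>x. 0 \<le> f x"
    and "\<And>\<epsilon>. \<epsilon> > 0 \<Longrightarrow> \<exists>M. \<forall>x. f x \<le> \<epsilon> + M * g x"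
  shows "(f \<longlongrightarrow> 0) F"
proof (rule order_tendstoI)
  fix \<epsilon> :: real assume \<epsilon>: "\<epsilon> > 0"
  then obtain M where M: "\<And>x. f x \<le> \<epsilon> / 2 + M * g x" using assms(3)[of "\<epsilon> / 2"] by auto
  have "((\<lambda>x. M * g x) \<longlongrightarrow> 0) F" using tendsto_mult_right_zero[OF assms(1)] .
  then have "eventually (\<lambda>x. M * g x < \<epsilon> / 2) F" using \<epsilon> by (intro order_tendstoD(2)) auto
  moreover have "f x < \<epsilon>" if "M * g x < \<epsilon> / 2" for x using M[of x] that by linarith
  ultimately show "eventually (\<lambda>x. f x < \<epsilon>) F" by (auto elim: eventually_mono)
next
  fix \<epsilon> :: real assume "\<epsilon> < 0"
  then show "eventually (\<lambda>x. \<epsilon> < f x) F" using assms(2) by (simp add: less_le_trans)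
qed

lemma approx_additive_multiple:
  fixes D :: "real \<Rightarrow> 'a::real_normed_vector"
  assumes D0: "D 0 = 0"
    and add: "\<And>a b. 0 \<le> a \<Longrightarrow> a \<le> T \<Longrightarrow> 0 \<le> b \<Longrightarrow> b \<le> T \<Longrightarrow> norm (D (a + b) - D a - D b) \<le> \<delta>"
    and u: "0 \<le> u" and j: "real j * u \<le> T"
  shows "norm (D (real j * u) - real j *\<^sub>R D u) \<le> real j * \<delta>"
  using j
proof (induction j)
  case 0 then show ?case using D0 by simp
next
  case (Suc j)
  have "u + real j * u \<le> T" using Suc.prems unfolding of_nat_Suc distrib_right by simp
  moreover have "0 \<le> real j * u" using u by simp
  ultimately have ju: "real j * u \<le> T" "u \<le> T" using u by linarith+
  have "D (real (Suc j) * u) - real (Suc j) *\<^sub>R D u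
      = (D (u + real j * u) - D u - D (real j * u)) + (D (real j * u) - real j *\<^sub>R D u)"
    by (simp add: algebra_simps)
  also have "norm \<dots> \<le> \<delta> + real j * \<delta>"
    using add[OF u ju(2) _ ju(1)] u Suc.IH[OF ju(1)] by (intro norm_triangle_le add_mono) auto
  finally show ?case by (simp add: algebra_simps)
qed

lemma approx_additive_bound:
  fixes D :: "real \<Rightarrow> 'a::real_normed_vector"
  assumes D0: "D 0 = 0"
    and add: "\<And>a b. 0 \<le> a \<Longrightarrow> a \<le> T \<Longrightarrow> 0 \<le> b \<Longrightarrow> b \<le> T \<Longrightarrow> norm (D (a + b) - D a - D b) \<le> \<delta>"
    and T: "T > 0" and N: "N \<ge> 1"
    and small: "\<And>a. 0 \<le> a \<Longrightarrow> a \<le> T / real N \<Longrightarrow> norm (D a) \<le> \<eta>"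
    and v: "0 \<le> v" "v \<le> T"
  shows "norm (D v) \<le> \<eta> + norm (D T) + (2 * real N + 1) * \<delta>"
proof -
  define u where "u = T / real N"
  have u: "u > 0" "real N * u = T" "u \<le> T"
    using T N by (auto simp: u_def field_simps)
  have \<delta>: "\<delta> \<ge> 0" using add[of 0 0] T D0 by simp
  define j where "j = nat \<lfloor>v / u\<rfloor>"
  have j: "real j * u \<le> v" "v < real j * u + u"
    unfolding j_def using nat_floor_divide_mult_le[OF v(1) u(1)] by simp_all
  then have jN: "j \<le> N" using v(2) u by (metis mult_le_cancel_right_pos of_nat_le_iff order_trans)
  have jT: "real j * u \<le> T" using j(1) v(2) by simp
  have "real N * norm (D u) = norm (real N *\<^sub>R D u)" by simp
  also have "\<dots> \<le> norm (D T) + norm (D (real N * u) - real N *\<^sub>R D u)"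
    using norm_triangle_ineq4[of "D T" "D T - real N *\<^sub>R D u"] u(2) by simp
  also have "\<dots> \<le> norm (D T) + real N * \<delta>"
    using approx_additive_multiple[OF D0 add, where u=u and j=N] u by simp
  finally have "real N * norm (D u) \<le> norm (D T) + real N * \<delta>" .
  then have Du: "real j * norm (D u) \<le> norm (D T) + real N * \<delta>"
    using jN by (meson mult_right_mono norm_ge_zero of_nat_le_iff order_trans)
  define v' where "v' = v - real j * u"
  have v': "0 \<le> v'" "v' \<le> u" using j by (auto simp: v'_def)
  have "D v = (D (v' + real j * u) - D v' - D (real j * u)) + D v'
      + (D (real j * u) - real j *\<^sub>R D u) + real j *\<^sub>R D u"
    by (simp add: v'_def)
  also have "norm \<dots> \<le> \<delta> + \<eta> + real j * \<delta> + real j * norm (D u)"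
    using add[OF v'(1) _ _ jT] small[OF v'(1)] approx_additive_multiple[OF D0 add _ jT] v' u
    by (intro norm_triangle_le add_mono) (auto simp: u_def)
  also have "\<dots> \<le> \<eta> + norm (D T) + (2 * real N + 1) * \<delta>"
    using Du jN \<delta> mult_right_mono[of "real j" "real N" \<delta>] by (simp add: algebra_simps)
  finally show ?thesis .
qed

text \<open>By Julia's lemma, the maps of a semigroup of parabolic self-maps with common Denjoy-Wolff
  point \<tau> do not decrease the height Im (cayley \<tau> z) in the upper half-plane model.\<close>

locale parabolic_semigroup =
  fixes phi :: "real \<Rightarrow> complex \<Rightarrow> complex" and \<tau> :: complex
  assumes sg: "holo_semigroup phi" and norm_\<tau>: "cmod \<tau> = 1"
    and Im_cayley_mono: "\<And>v x. v \<ge> 0 \<Longrightarrow> x \<in> unit_disc \<Longrightarrow> Im (cayley \<tau> x) \<le> Im (cayley \<tau> (phi v x))"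
begin

definition height :: "complex \<Rightarrow> real" where
  "height x = Im (cayley \<tau> x)"

definition displ :: "real \<Rightarrow> complex \<Rightarrow> complex" where
  "displ v x = cayley \<tau> (phi v x) - cayley \<tau> x"

definition rel_displ :: "real \<Rightarrow> complex \<Rightarrow> real" where
  "rel_displ v x = cmod (displ v x) / height x"

lemma height_pos: "x \<in> unit_disc \<Longrightarrow> height x > 0"
  unfolding height_def using Im_cayley_pos[OF norm_\<tau>] by (simp add: unit_disc_def)

lemma Im_displ_nonneg: "v \<ge> 0 \<Longrightarrow> x \<in> unit_disc \<Longrightarrow> Im (displ v x) \<ge> 0"
  unfolding displ_def using Im_cayley_mono by simp

lemma displ_0: "x \<in> unit_disc \<Longrightarrow> displ 0 x = 0"
  unfolding displ_def using holo_semigroup_0[OF sg] by simp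

lemma displ_add:
  "a \<ge> 0 \<Longrightarrow> b \<ge> 0 \<Longrightarrow> x \<in> unit_disc \<Longrightarrow> displ (a + b) x = displ a (phi b x) + displ b x"
  unfolding displ_def using holo_semigroup_add[OF sg] by simp

lemma Im_displ_mono:
  assumes "0 \<le> a" "a \<le> b" "x \<in> unit_disc"
  shows "Im (displ a x) \<le> Im (displ b x)"
proof -
  have "displ b x = displ (b - a) (phi a x) + displ a x" using displ_add[of "b - a" a x] assms by simp
  moreover have "Im (displ (b - a) (phi a x)) \<ge> 0"
    using Im_displ_nonneg holo_semigroup_in_unit_disc[OF sg] assms by simp
  ultimately show ?thesis by simp
qed

lemma holomorphic_on_displ: "a \<ge> 0 \<Longrightarrow> displ a holomorphic_on unit_disc"
proof -
  assume a: "a \<ge> 0"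
  have "phi a holomorphic_on unit_disc" and "phi a ` unit_disc \<subseteq> unit_disc"
    using holo_semigroup_self_map[OF sg a] by (auto simp: holo_self_map_def)
  then have "cayley \<tau> \<circ> phi a holomorphic_on unit_disc"
    using holomorphic_on_compose_gen holomorphic_on_cayley[OF norm_\<tau>] by blast
  then have "(\<lambda>x. cayley \<tau> (phi a x) - cayley \<tau> x) holomorphic_on unit_disc"
    using holomorphic_on_cayley[OF norm_\<tau>] by (intro holomorphic_intros) (auto simp: o_def)
  then show ?thesis by (simp add: displ_def[abs_def])
qed

lemma rel_displ_nonneg: "x \<in> unit_disc \<Longrightarrow> rel_displ v x \<ge> 0"
  unfolding rel_displ_def using height_pos by (simp add: less_imp_le)

lemma pseudo_hyp_dist_eq_displ:
  assumes v: "v \<ge> 0" and x: "x \<in> unit_disc"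
  shows "pseudo_hyp_dist (phi v x) x = cmod (displ v x) / cmod (displ v x + \<i> * of_real (2 * height x))"
proof -
  have nx: "cmod x < 1" and ny: "cmod (phi v x) < 1"
    using x holo_semigroup_in_unit_disc[OF sg v x] by (auto simp: unit_disc_def)
  have eq: "cayley \<tau> (phi v x) - cnj (cayley \<tau> x) = displ v x + \<i> * of_real (2 * height x)"
    unfolding displ_def height_def by (simp add: complex_eq_iff)
  show ?thesis
    unfolding eq[symmetric] unfolding displ_def by (rule pseudo_hyp_dist_cayley[OF norm_\<tau> ny nx])
qed

lemma norm_displ_plus_height_bounds:
  assumes v: "v \<ge> 0" and x: "x \<in> unit_disc"
  shows "2 * height x \<le> cmod (displ v x + \<i> * of_real (2 * height x))"
    and "cmod (displ v x + \<i> * of_real (2 * height x)) \<le> cmod (displ v x) + 2 * height x"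
proof -
  have "Im (displ v x + \<i> * of_real (2 * height x)) = Im (displ v x) + 2 * height x" by simp
  then show "2 * height x \<le> cmod (displ v x + \<i> * of_real (2 * height x))"
    using abs_Im_le_cmod[of "displ v x + \<i> * of_real (2 * height x)"] Im_displ_nonneg[OF v x]
    by linarith
  have "cmod (\<i> * complex_of_real (2 * height x)) = 2 * height x"
    using height_pos[OF x] by (simp only: norm_mult norm_ii norm_of_real)
  then show "cmod (displ v x + \<i> * of_real (2 * height x)) \<le> cmod (displ v x) + 2 * height x"
    by (metis norm_triangle_ineq)
qed

lemma pseudo_hyp_dist_le_rel_displ:
  assumes v: "v \<ge> 0" and x: "x \<in> unit_disc"
  shows "pseudo_hyp_dist (phi v x) x \<le> rel_displ v x / 2"
proof -
  have y: "height x > 0" using height_pos[OF x] .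
  have "cmod (displ v x + \<i> * of_real (2 * height x)) > 0"
    using norm_displ_plus_height_bounds(1)[OF v x] y by linarith
  then have "cmod (displ v x) / cmod (displ v x + \<i> * of_real (2 * height x)) \<le> cmod (displ v x) / (2 * height x)"
    using norm_displ_plus_height_bounds(1)[OF v x] y by (intro divide_left_mono) auto
  then show ?thesis unfolding pseudo_hyp_dist_eq_displ[OF v x] rel_displ_def by simp
qed

lemma rel_displ_le_pseudo_hyp_dist:
  assumes v: "v \<ge> 0" and x: "x \<in> unit_disc" and p: "pseudo_hyp_dist (phi v x) x \<le> 1/2"
  shows "rel_displ v x \<le> 4 * pseudo_hyp_dist (phi v x) x"
proof -
  let ?p = "pseudo_hyp_dist (phi v x) x" and ?d = "cmod (displ v x + \<i> * of_real (2 * height x))"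
  have y: "height x > 0" using height_pos[OF x] .
  have "?d > 0" using norm_displ_plus_height_bounds(1)[OF v x] y by linarith
  then have "cmod (displ v x) = ?p * ?d" using pseudo_hyp_dist_eq_displ[OF v x] by simp
  also have "\<dots> \<le> ?p * (cmod (displ v x) + 2 * height x)"
    using norm_displ_plus_height_bounds(2)[OF v x] pseudo_hyp_dist_nonneg by (intro mult_left_mono)
  also have "\<dots> \<le> cmod (displ v x) / 2 + 2 * ?p * height x"
    using p mult_right_mono[OF p, of "cmod (displ v x)"] by (simp add: algebra_simps)
  finally have "cmod (displ v x) \<le> 4 * ?p * height x" by simp
  then show ?thesis unfolding rel_displ_def using y by (simp add: divide_le_eq)
qed

lemma tendsto_rel_displ_0_iff:
  assumes v: "v \<ge> 0" and x: "eventually (\<lambda>n. x n \<in> unit_disc) F"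
  shows "((\<lambda>n. rel_displ v (x n)) \<longlongrightarrow> 0) F \<longleftrightarrow> ((\<lambda>n. pseudo_hyp_dist (phi v (x n)) (x n)) \<longlongrightarrow> 0) F"
proof
  assume lim: "((\<lambda>n. rel_displ v (x n)) \<longlongrightarrow> 0) F"
  show "((\<lambda>n. pseudo_hyp_dist (phi v (x n)) (x n)) \<longlongrightarrow> 0) F"
  proof (rule tendsto_sandwich[OF _ _ tendsto_const])
    show "eventually (\<lambda>n. 0 \<le> pseudo_hyp_dist (phi v (x n)) (x n)) F"
      by (simp add: pseudo_hyp_dist_nonneg)
    show "eventually (\<lambda>n. pseudo_hyp_dist (phi v (x n)) (x n) \<le> rel_displ v (x n) / 2) F"
      using x by (rule eventually_mono) (rule pseudo_hyp_dist_le_rel_displ[OF v])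
    show "((\<lambda>n. rel_displ v (x n) / 2) \<longlongrightarrow> 0) F" using tendsto_divide_zero[OF lim] .
  qed
next
  assume lim: "((\<lambda>n. pseudo_hyp_dist (phi v (x n)) (x n)) \<longlongrightarrow> 0) F"
  show "((\<lambda>n. rel_displ v (x n)) \<longlongrightarrow> 0) F"
  proof (rule tendsto_sandwich[OF _ _ tendsto_const])
    show "eventually (\<lambda>n. 0 \<le> rel_displ v (x n)) F"
      using x by (rule eventually_mono) (rule rel_displ_nonneg)
    show "eventually (\<lambda>n. rel_displ v (x n) \<le> 4 * pseudo_hyp_dist (phi v (x n)) (x n)) F"
      using eventually_conj[OF x order_tendstoD(2)[OF lim, of "1/2"]]
      by (rule eventually_mono) (use rel_displ_le_pseudo_hyp_dist[OF v] in auto)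
    show "((\<lambda>n. 4 * pseudo_hyp_dist (phi v (x n)) (x n)) \<longlongrightarrow> 0) F"
      using tendsto_mult_right_zero[OF lim] .
  qed
qed

lemma rel_displ_add:
  assumes a: "a \<ge> 0" and b: "b \<ge> 0" and x: "x \<in> unit_disc"
  shows "rel_displ (a + b) x \<le> rel_displ a (phi b x) * (1 + rel_displ b x) + rel_displ b x"
proof -
  have y: "height x > 0" using height_pos[OF x] .
  have "height (phi b x) = height x + Im (displ b x)" by (simp add: height_def displ_def)
  also have "\<dots> \<le> height x * (1 + rel_displ b x)"
    using abs_Im_le_cmod[of "displ b x"] y by (simp add: rel_displ_def field_simps)
  finally have yb: "height (phi b x) / height x \<le> 1 + rel_displ b x"
    using y by (simp add: divide_le_eq mult.commute)
  have "rel_displ (a + b) x \<le> (cmod (displ a (phi b x)) + cmod (displ b x)) / height x"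
    unfolding rel_displ_def displ_add[OF a b x] using y by (intro divide_right_mono norm_triangle_ineq) auto
  also have "\<dots> = rel_displ a (phi b x) * (height (phi b x) / height x) + rel_displ b x"
    using y height_pos[OF holo_semigroup_in_unit_disc[OF sg b x]]
    by (simp add: rel_displ_def add_divide_distrib)
  also have "\<dots> \<le> rel_displ a (phi b x) * (1 + rel_displ b x) + rel_displ b x"
    using mult_left_mono[OF yb rel_displ_nonneg[OF holo_semigroup_in_unit_disc[OF sg b x]]] by simp
  finally show ?thesis .
qed

lemma displ_approx_additive:
  assumes a: "0 \<le> a" "a \<le> t" and b: "b \<ge> 0" and x: "x \<in> unit_disc"
    and c: "pseudo_hyp_dist x (phi b x) \<le> c" "c < 1"
  shows "cmod (displ (a + b) x - displ a x - displ b x) \<le> 2 * c / (1 - c) * cmod (displ t x)"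
proof -
  have K: "2 * c / (1 - c) \<ge> 0" using c pseudo_hyp_dist_nonneg[of x "phi b x"] by simp
  have "cmod (displ (a + b) x - displ a x - displ b x) = cmod (displ a (phi b x) - displ a x)"
    using displ_add[OF a(1) b x] by simp
  also have "\<dots> \<le> 2 * c / (1 - c) * Im (displ a x)"
    using upper_halfplane_Harnack[OF norm_\<tau> holomorphic_on_displ[OF a(1)] _ x
        holo_semigroup_in_unit_disc[OF sg b x] c] Im_displ_nonneg[OF a(1)] by blast
  also have "\<dots> \<le> 2 * c / (1 - c) * cmod (displ t x)"
    using Im_displ_mono[OF a x] abs_Im_le_cmod[of "displ t x"] K
    by (intro mult_left_mono) auto
  finally show ?thesis .
qed

lemma rel_displ_le_by_approx_additive:
  assumes x: "x \<in> unit_disc" and t: "t > 0" and c: "c < 1"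
    and close: "\<And>b. 0 \<le> b \<Longrightarrow> b \<le> t \<Longrightarrow> pseudo_hyp_dist x (phi b x) \<le> c"
    and N: "N \<ge> 1" and small: "\<And>a. 0 \<le> a \<Longrightarrow> a \<le> t / real N \<Longrightarrow> rel_displ a x \<le> \<eta>"
    and v: "0 \<le> v" "v \<le> t"
  shows "rel_displ v x \<le> \<eta> + (1 + (2 * real N + 1) * (2 * c / (1 - c))) * rel_displ t x"
proof -
  have y: "height x > 0" using height_pos[OF x] .
  have "cmod (displ v x)
      \<le> \<eta> * height x + cmod (displ t x) + (2 * real N + 1) * (2 * c / (1 - c) * cmod (displ t x))"
  proof (rule approx_additive_bound[where D = "\<lambda>a. displ a x"])
    show "cmod (displ (a + b) x - displ a x - displ b x) \<le> 2 * c / (1 - c) * cmod (displ t x)"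
      if "0 \<le> a" "a \<le> t" "0 \<le> b" "b \<le> t" for a b
      using displ_approx_additive[OF _ _ _ x close c] that by simp
    show "cmod (displ a x) \<le> \<eta> * height x" if "0 \<le> a" "a \<le> t / real N" for a
      using small[OF that] y by (simp add: rel_displ_def divide_le_eq)
  qed (use displ_0[OF x] t N v in auto)
  then show ?thesis using y by (simp add: rel_displ_def divide_le_eq algebra_simps)
qed

lemma rel_displ_orbit_tendsto_0_le:
  assumes t: "t > 0" and z: "z \<in> unit_disc"
    and lim: "(\<lambda>n. rel_displ t (phi (real n * t) z)) \<longlonglongrightarrow> 0"
    and v: "0 \<le> v" "v \<le> t"
  shows "(\<lambda>n. rel_displ v (phi (real n * t) z)) \<longlonglongrightarrow> 0"
proof (rule tendsto_0_if_le_eps_plus_mult[OF lim])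
  define p where "p n = phi (real n * t) z" for n
  have pD: "p n \<in> unit_disc" for n
    unfolding p_def using holo_semigroup_in_unit_disc[OF sg _ z] t by simp
  have orbit: "pseudo_hyp_dist (p n) (phi a (p n)) \<le> pseudo_hyp_dist z (phi a z)" if "a \<ge> 0" for n a
    unfolding p_def using holo_semigroup_pseudo_hyp_dist_orbit_step[OF sg z _ that] t by simp
  show "rel_displ v (phi (real n * t) z) \<ge> 0" for n using rel_displ_nonneg[OF pD] by (simp add: p_def)
  fix \<epsilon> :: real assume \<epsilon>: "\<epsilon> > 0"
  obtain c where c: "c < 1" "\<And>b. 0 \<le> b \<Longrightarrow> b \<le> t \<Longrightarrow> pseudo_hyp_dist z (phi b z) \<le> c"
    using holo_semigroup_pseudo_hyp_dist_bounded[OF sg z] by blast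
  obtain h where h: "h > 0" "\<And>a. 0 \<le> a \<Longrightarrow> a \<le> h \<Longrightarrow> pseudo_hyp_dist z (phi a z) \<le> min (1/2) (\<epsilon>/4)"
    using holo_semigroup_small_step[OF sg z, of "min (1/2) (\<epsilon>/4)"] \<epsilon> by auto
  define N where "N = nat \<lceil>t / h\<rceil> + 1"
  have N: "N \<ge> 1" by (simp add: N_def)
  have "t / h \<le> real N" unfolding N_def by linarith
  then have "t / real N \<le> h" using h(1) N by (simp add: divide_le_eq mult.commute)
  have "rel_displ v (p n) \<le> \<epsilon> + (1 + (2 * real N + 1) * (2 * c / (1 - c))) * rel_displ t (p n)" for n
  proof (rule rel_displ_le_by_approx_additive[OF pD t c(1) _ N _ v])
    show "pseudo_hyp_dist (p n) (phi b (p n)) \<le> c" if "0 \<le> b" "b \<le> t" for b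
      using orbit[OF that(1), of n] c(2)[OF that] by linarith
    show "rel_displ a (p n) \<le> \<epsilon>" if "0 \<le> a" "a \<le> t / real N" for a
    proof -
      have "pseudo_hyp_dist z (phi a z) \<le> min (1/2) (\<epsilon>/4)"
        using h(2)[OF that(1)] that(2) \<open>t / real N \<le> h\<close> by simp
      then have "pseudo_hyp_dist (phi a (p n)) (p n) \<le> min (1/2) (\<epsilon>/4)"
        using orbit[OF that(1), of n] by (simp add: pseudo_hyp_dist_commute)
      then show ?thesis using rel_displ_le_pseudo_hyp_dist[OF that(1) pD, of n] by simp
    qed
  qed
  then show "\<exists>M. \<forall>n. rel_displ v (phi (real n * t) z) \<le> \<epsilon> + M * rel_displ t (phi (real n * t) z)"
    unfolding p_def by blast
qed

lemma rel_displ_orbit_tendsto_0_at_top: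
  assumes t: "t > 0" and z: "z \<in> unit_disc"
    and lim: "(\<lambda>n. rel_displ t (phi (real n * t) z)) \<longlonglongrightarrow> 0"
    and v: "v \<ge> 0"
  shows "((\<lambda>s. rel_displ v (phi s z)) \<longlongrightarrow> 0) at_top"
proof -
  have orbit: "eventually (\<lambda>s. phi s z \<in> unit_disc) at_top"
    using eventually_ge_at_top[of "0::real"]
    by (rule eventually_mono) (rule holo_semigroup_in_unit_disc[OF sg _ z])
  have base: "((\<lambda>s. rel_displ v (phi s z)) \<longlongrightarrow> 0) at_top" if v: "0 \<le> v" "v \<le> t" for v
  proof -
    have "(\<lambda>n. rel_displ v (phi (real n * t) z)) \<longlonglongrightarrow> 0"
      using rel_displ_orbit_tendsto_0_le[OF t z lim v] .
    moreover have "eventually (\<lambda>n. phi (real n * t) z \<in> unit_disc) sequentially"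
      using holo_semigroup_in_unit_disc[OF sg _ z] t by simp
    ultimately have "(\<lambda>n. pseudo_hyp_dist (phi v (phi (real n * t) z)) (phi (real n * t) z)) \<longlonglongrightarrow> 0"
      by (subst (asm) tendsto_rel_displ_0_iff[OF v(1)])
    then have "((\<lambda>s. pseudo_hyp_dist (phi v (phi s z)) (phi s z)) \<longlongrightarrow> 0) at_top"
      by (rule holo_semigroup_step_tendsto_at_top[OF sg t z v(1)])
    then show ?thesis using tendsto_rel_displ_0_iff[OF v(1) orbit] by simp
  qed
  \<comment> \<open>Longer times are reached in steps of length t by the subadditivity of rel_displ.\<close>
  have "((\<lambda>s. rel_displ v (phi s z)) \<longlongrightarrow> 0) at_top" if "0 \<le> v" "v \<le> real k * t + t" for k v
    using that
  proof (induction k arbitrary: v)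
    case 0 then show ?case using base by simp
  next
    case (Suc k)
    show ?case
    proof (cases "v \<le> t")
      case True then show ?thesis using base Suc.prems by simp
    next
      case False
      then have r: "0 \<le> v - t" "v - t \<le> real k * t + t" using Suc.prems by (auto simp: algebra_simps)
      have "((\<lambda>s. rel_displ (v - t) (phi s z)) \<longlongrightarrow> 0) at_top" using Suc.IH[OF r] .
      then have "((\<lambda>s. rel_displ (v - t) (phi (t + s) z)) \<longlongrightarrow> 0) at_top"
        using filterlim_compose filterlim_tendsto_add_at_top[OF tendsto_const filterlim_ident]
        by blast
      then have lim: "((\<lambda>s. rel_displ (v - t) (phi (t + s) z) * (1 + rel_displ t (phi s z))
          + rel_displ t (phi s z)) \<longlongrightarrow> 0 * (1 + 0) + 0) at_top"
        using base[of t] t by (intro tendsto_intros) auto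
      have ub: "eventually (\<lambda>s. rel_displ v (phi s z)
          \<le> rel_displ (v - t) (phi (t + s) z) * (1 + rel_displ t (phi s z)) + rel_displ t (phi s z)) at_top"
        using eventually_ge_at_top[of "0::real"]
      proof (rule eventually_mono)
        fix s :: real assume s: "s \<ge> 0"
        show "rel_displ v (phi s z)
            \<le> rel_displ (v - t) (phi (t + s) z) * (1 + rel_displ t (phi s z)) + rel_displ t (phi s z)"
          using rel_displ_add[OF r(1) _ holo_semigroup_in_unit_disc[OF sg s z], of t]
            holo_semigroup_add[OF sg _ s z, of t] t by simp
      qed
      have "eventually (\<lambda>s. 0 \<le> rel_displ v (phi s z)) at_top"
        using orbit by (rule eventually_mono) (rule rel_displ_nonneg)
      from tendsto_sandwich[OF this ub tendsto_const] lim show ?thesis by simp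
    qed
  qed
  moreover obtain k :: nat where "v / t \<le> real k" using real_arch_simple by blast
  then have "v \<le> real k * t + t" using t by (simp add: divide_le_eq)
  ultimately show ?thesis using v by blast
qed

lemma tendsto_hyp_step_0_iff:
  assumes t: "t \<ge> 0" and z: "z \<in> unit_disc"
  shows "(\<lambda>n. hyp_dist ((phi t ^^ n) z) ((phi t ^^ Suc n) z)) \<longlonglongrightarrow> 0
    \<longleftrightarrow> (\<lambda>n. rel_displ t (phi (real n * t) z)) \<longlonglongrightarrow> 0"
proof -
  define p where "p n = phi (real n * t) z" for n
  have pD: "p n \<in> unit_disc" for n
    unfolding p_def using holo_semigroup_in_unit_disc[OF sg _ z] t by simp
  have "(phi t ^^ n) z = p n" "(phi t ^^ Suc n) z = phi t (p n)" for n
    using holo_semigroup_funpow[OF sg t z] by (simp_all add: p_def)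
  then have "(\<lambda>n. hyp_dist ((phi t ^^ n) z) ((phi t ^^ Suc n) z)) \<longlonglongrightarrow> 0
      \<longleftrightarrow> (\<lambda>n. pseudo_hyp_dist (phi t (p n)) (p n)) \<longlonglongrightarrow> 0"
    using tendsto_hyp_dist_0_iff[OF pD holo_semigroup_in_unit_disc[OF sg t pD]]
    by (simp add: pseudo_hyp_dist_commute)
  also have "\<dots> \<longleftrightarrow> (\<lambda>n. rel_displ t (p n)) \<longlonglongrightarrow> 0"
    using tendsto_rel_displ_0_iff[OF t, of p sequentially] pD by simp
  finally show ?thesis by (simp add: p_def)
qed

end

lemma parabolic_semigroupI:
  assumes sg: "holo_semigroup phi" and par: "\<forall>t>0. parabolic (phi t)"
    and t0: "t0 > 0" and dw: "boundary_DW_point (phi t0) \<tau>"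
  shows "parabolic_semigroup phi \<tau>"
proof
  show "holo_semigroup phi" by (fact sg)
  show \<tau>: "cmod \<tau> = 1" using dw by (simp add: boundary_DW_point_def)
  fix v :: real and x assume v: "v \<ge> 0" and x: "x \<in> unit_disc"
  show "Im (cayley \<tau> x) \<le> Im (cayley \<tau> (phi v x))"
  proof (cases "v = 0")
    case True then show ?thesis using holo_semigroup_0[OF sg x] by simp
  next
    case False
    with v have "v > 0" by simp
    then obtain \<tau>' where dw': "boundary_DW_point (phi v) \<tau>'" "angular_derivative (phi v) \<tau>' 1"
      using par unfolding parabolic_def by blast
    moreover have "\<tau>' = \<tau>"
      using holo_semigroup_boundary_DW_point_unique[OF sg t0 \<open>v > 0\<close> dw dw'(1)] .
    ultimately show ?thesis
      using Julia_Im_cayley_mono[OF holo_semigroup_self_map[OF sg v] \<tau> _ x] by simp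
  qed
qed

theorem lemma5p1:
  fixes phi :: "real \<Rightarrow> complex \<Rightarrow> complex"
  assumes "holo_semigroup phi"
    and "\<forall>t>0. parabolic (phi t)"
    and "\<exists>t0>0. zero_hyp_step (phi t0)"
  shows "\<forall>t>0. zero_hyp_step (phi t)"
proof (intro allI impI)
  fix t :: real assume t: "t > 0"
  obtain t0 z0 where t0: "t0 > 0" and z0: "z0 \<in> unit_disc"
    and step0: "(\<lambda>n. hyp_dist ((phi t0 ^^ n) z0) ((phi t0 ^^ Suc n) z0)) \<longlonglongrightarrow> 0"
    using assms(3) unfolding zero_hyp_step_def by blast
  obtain \<tau> where "boundary_DW_point (phi t0) \<tau>"
    using assms(2) t0 unfolding parabolic_def by blast
  then interpret parabolic_semigroup phi \<tau>
    using parabolic_semigroupI assms(1,2) t0 by blast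
  have "(\<lambda>n. rel_displ t0 (phi (real n * t0) z0)) \<longlonglongrightarrow> 0"
    using step0 tendsto_hyp_step_0_iff[OF _ z0] t0 by simp
  then have "((\<lambda>s. rel_displ t (phi s z0)) \<longlongrightarrow> 0) at_top"
    using rel_displ_orbit_tendsto_0_at_top[OF t0 z0] t by simp
  moreover have "filterlim (\<lambda>n. real n * t) at_top sequentially"
    using filterlim_at_top_mult_tendsto_pos[OF tendsto_const t filterlim_real_sequentially] .
  ultimately have "(\<lambda>n. rel_displ t (phi (real n * t) z0)) \<longlonglongrightarrow> 0"
    by (rule filterlim_compose)
  then have "(\<lambda>n. hyp_dist ((phi t ^^ n) z0) ((phi t ^^ Suc n) z0)) \<longlonglongrightarrow> 0"
    using tendsto_hyp_step_0_iff[OF less_imp_le[OF t] z0] by simp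
  then show "zero_hyp_step (phi t)" unfolding zero_hyp_step_def using z0 by blast
qed

end
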